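(* Let $(C,S)$ be a partially shaded tree, where $C$ is the support tree of a vertex of a non-degenerate transportation polytope $\mathrm{TP}(u,v)$. If some supply node satisfies (SIN) in $(C,S)$, then no demand node is incident in $C$ only to shaded $+$edges. In particular, every well-connected demand node is incident to a shaded $-$edge.
   Context: Let $N_1,N_2\ge1$, $u\in\mathbb{R}_{>0}^{N_1}$, $v\in\mathbb{R}_{>0}^{N_2}$ with $\sum_iu_i=\sum_jv_j$, and $\mathrm{TP}(u,v)=\{y\in\mathbb{R}^{N_1\times N_2}: \sum_j y_{ij}=u_i\ \forall i,\ \sum_i y_{ij}=v_j\ \forall j,\ y\ge 0\}$. View supply nodes $\sigma^1,\dots,\sigma^{N_1}$ and demand nodes $\delta^1,\dots,\delta^{N_2}$ as the two sides of $K_{N_1,N_2}$; the support graph of $y$ consists of the edges $\{\sigma^i,\delta^j\}$ with $y_{ij}>0$. $\mathrm{TP}(u,v)$ is non-degenerate if there are no nonempty proper subsets $I\subsetneq\{1,\dots,N_1\}$, $J\subsetneq\{1,\dots,N_2\}$ with $\sum_{i\in I}u_i=\sum_{j\in J}v_j$; then the support graph of each vertex is a spanning tree of $K_{N_1,N_2}$ determining the vertex; these are called trees. Fix a tree $F$ and a demand node $\delta^*$. Label the edges of $F$: each edge of $F$ lies on a path in $F$ starting at $\delta^*$, and edges along such paths are labeled alternately $+,-,+,\dots$ beginning with $+$ at $\delta^*$ (so each supply node is incident in $F$ to exactly one $+$edge, each demand node other than $\delta^*$ to exactly one $-$edge, and $\delta^*$ only to $+$edges). A partially shaded tree is a pair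 $(C,S)$ with $C$ a tree and $S\subseteq C\cap F$ the shaded edges (others unshaded); shaded edges carry their labels from $F$. A demand node is well-connected if it is not incident to an unshaded edge of $C$. For a supply node $\sigma$, every edge of $C$ lies on a unique path in $C$ starting at $\sigma$; number edges along such paths starting with $1$ at edges incident to $\sigma$, and call an edge odd (w.r.t. $\sigma$) if its number is odd. A supply node $\sigma$ satisfies (SIN) in $(C,S)$ if every edge of $C$ that is odd with respect to $\sigma$ is either unshaded or a shaded $-$edge incident to a well-connected demand node. *)

theory Defs
  imports Main "HOL-Library.Extended_Real"
begin

text \<open>Supply nodes are indexed 0..<N1, demand nodes 0..<N2. A point of
  R^(N1 x N2) is a function y :: nat => nat => real that vanishes outside the index range.
  An edge {sigma^i, delta^j} of K_{N1,N2} is represented by the pair (i,j).\<close>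

datatype node = Sup nat | Dem nat

definition TP :: "nat \<Rightarrow> nat \<Rightarrow> (nat \<Rightarrow> real) \<Rightarrow> (nat \<Rightarrow> real) \<Rightarrow> (nat \<Rightarrow> nat \<Rightarrow> real) set" where
  "TP N1 N2 u v = {y. (\<forall>i j. (i < N1 \<and> j < N2) \<or> y i j = 0)
      \<and> (\<forall>i<N1. (\<Sum>j<N2. y i j) = u i)
      \<and> (\<forall>j<N2. (\<Sum>i<N1. y i j) = v j)
      \<and> (\<forall>i j. y i j \<ge> 0)}"

definition is_vertex :: "(nat \<Rightarrow> nat \<Rightarrow> real) set \<Rightarrow> (nat \<Rightarrow> nat \<Rightarrow> real) \<Rightarrow> bool" where
  "is_vertex P y \<longleftrightarrow> y \<in> P \<and>
     \<not> (\<exists>a\<in>P. \<exists>b\<in>P. \<exists>t::real. 0 < t \<and> t < 1 \<and> a \<noteq> b \<and>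
           y = (\<lambda>i j. t * a i j + (1 - t) * b i j))"

definition non_degenerate :: "nat \<Rightarrow> nat \<Rightarrow> (nat \<Rightarrow> real) \<Rightarrow> (nat \<Rightarrow> real) \<Rightarrow> bool" where
  "non_degenerate N1 N2 u v \<longleftrightarrow>
     (\<forall>I J. I \<noteq> {} \<and> I \<subset> {..<N1} \<and> J \<noteq> {} \<and> J \<subset> {..<N2} \<longrightarrow> sum u I \<noteq> sum v J)"

definition support :: "nat \<Rightarrow> nat \<Rightarrow> (nat \<Rightarrow> nat \<Rightarrow> real) \<Rightarrow> (nat \<times> nat) set" where
  "support N1 N2 y = {(i,j). i < N1 \<and> j < N2 \<and> y i j > 0}"

definition is_tree :: "nat \<Rightarrow> nat \<Rightarrow> (nat \<Rightarrow> real) \<Rightarrow> (nat \<Rightarrow> real) \<Rightarrow> (nat \<times> nat) set \<Rightarrow> bool" where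
  "is_tree N1 N2 u v C \<longleftrightarrow> (\<exists>y. is_vertex (TP N1 N2 u v) y \<and> C = support N1 N2 y)"

definition links :: "nat \<times> nat \<Rightarrow> node \<Rightarrow> node \<Rightarrow> bool" where
  "links e a b \<longleftrightarrow> (a = Sup (fst e) \<and> b = Dem (snd e)) \<or> (a = Dem (snd e) \<and> b = Sup (fst e))"

definition path_in :: "(nat \<times> nat) set \<Rightarrow> node list \<Rightarrow> bool" where
  "path_in C ns \<longleftrightarrow> distinct ns \<and>
     (\<forall>k. Suc k < length ns \<longrightarrow> (\<exists>e\<in>C. links e (ns ! k) (ns ! Suc k)))"

definition edge_pos :: "(nat \<times> nat) set \<Rightarrow> node \<Rightarrow> nat \<times> nat \<Rightarrow> nat \<Rightarrow> bool" where
  "edge_pos C x e k \<longleftrightarrow> e \<in> C \<and> (\<exists>ns. path_in C ns \<and> ns \<noteq> [] \<and> hd ns = x \<and>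
       1 \<le> k \<and> k < length ns \<and> links e (ns ! (k - 1)) (ns ! k))"

definition plus_edge :: "(nat \<times> nat) set \<Rightarrow> nat \<Rightarrow> nat \<times> nat \<Rightarrow> bool" where
  "plus_edge F ds e \<longleftrightarrow> (\<exists>k. odd k \<and> edge_pos F (Dem ds) e k)"

definition minus_edge :: "(nat \<times> nat) set \<Rightarrow> nat \<Rightarrow> nat \<times> nat \<Rightarrow> bool" where
  "minus_edge F ds e \<longleftrightarrow> (\<exists>k. even k \<and> edge_pos F (Dem ds) e k)"

definition odd_wrt :: "(nat \<times> nat) set \<Rightarrow> nat \<Rightarrow> nat \<times> nat \<Rightarrow> bool" where
  "odd_wrt C s e \<longleftrightarrow> (\<exists>k. odd k \<and> edge_pos C (Sup s) e k)"

definition well_connected :: "(nat \<times> nat) set \<Rightarrow> (nat \<times> nat) set \<Rightarrow> nat \<Rightarrow> bool" where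
  "well_connected C S j \<longleftrightarrow> \<not> (\<exists>i. (i, j) \<in> C \<and> (i, j) \<notin> S)"

definition SIN :: "(nat \<times> nat) set \<Rightarrow> nat \<Rightarrow> (nat \<times> nat) set \<Rightarrow> (nat \<times> nat) set \<Rightarrow> nat \<Rightarrow> bool" where
  "SIN F ds C S s \<longleftrightarrow> (\<forall>e\<in>C. odd_wrt C s e \<longrightarrow>
      (e \<notin> S \<or> (e \<in> S \<and> minus_edge F ds e \<and> well_connected C S (snd e))))"

end

theory Submission
  imports Defs
begin

text \<open>Every demand node \<open>\<delta>\<^sup>j\<close> is joined in \<open>C\<close> to the supply node \<open>\<sigma>\<close> satisfying (SIN):
  \<open>C\<close> is the support of a feasible point, and a component of it missing \<open>\<delta>\<^sup>j\<close> would split the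
  margins into nonempty proper index sets with equal sums, which non-degeneracy (or positivity
  of the margins) forbids. The last edge of such a path is odd with respect to \<open>\<sigma>\<close>, so by (SIN)
  it is unshaded or a shaded \<open>-\<close>edge, and then not also a \<open>+\<close>edge. Indeed the labels of \<open>F\<close>
  are consistent: two paths from \<open>\<delta>*\<close> crossing one edge in opposite directions combine into a
  closed walk through it, and weighting the edges of that walk alternately by \<open>+1\<close> and \<open>-1\<close>
  gives a nonzero circulation supported on \<open>F\<close>. Adding and subtracting a small multiple of it
  exhibits the vertex as the midpoint of two distinct feasible points.\<close>

fun edge_between :: "node \<Rightarrow> node \<Rightarrow> nat \<times> nat" where
  "edge_between (Sup i) (Dem j) = (i, j)"
| "edge_between (Dem j) (Sup i) = (i, j)"
| "edge_between _ _ = (0, 0)"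

fun walk_edges :: "node list \<Rightarrow> (nat \<times> nat) list" where
  "walk_edges (x # y # ns) = edge_between x y # walk_edges (y # ns)"
| "walk_edges _ = []"

fun walk :: "(nat \<times> nat) set \<Rightarrow> node list \<Rightarrow> bool" where
  "walk C (x # y # ns) \<longleftrightarrow> (\<exists>e\<in>C. links e x y) \<and> walk C (y # ns)"
| "walk C _ \<longleftrightarrow> True"

fun is_dem :: "node \<Rightarrow> bool" where
  "is_dem (Dem _) \<longleftrightarrow> True"
| "is_dem (Sup _) \<longleftrightarrow> False"

lemma links_imp_edge_between: "links e x y \<Longrightarrow> edge_between x y = e"
  by (cases e) (auto simp: links_def)

lemma links_commute: "links e x y \<longleftrightarrow> links e y x"
  by (auto simp: links_def)

lemma links_is_dem: "links e x y \<Longrightarrow> is_dem x \<longleftrightarrow> \<not> is_dem y"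
  by (auto simp: links_def)

lemma edge_between_commute: "edge_between x y = edge_between y x"
  by (cases x; cases y) auto

lemma walk_iff_nth:
  "walk C ns \<longleftrightarrow> (\<forall>k. Suc k < length ns \<longrightarrow> (\<exists>e\<in>C. links e (ns ! k) (ns ! Suc k)))"
proof (induction C ns rule: walk.induct)
  case (1 C x y ns)
  show ?case
    unfolding walk.simps(1) 1 by (simp add: All_less_Suc2)
qed auto

lemma path_in_iff_walk: "path_in C ns \<longleftrightarrow> distinct ns \<and> walk C ns"
  by (simp add: path_in_def walk_iff_nth)

lemma walk_take: "walk C ns \<Longrightarrow> walk C (take n ns)"
  by (auto simp: walk_iff_nth)

lemma walk_append: "walk C (xs @ a # zs) \<longleftrightarrow> walk C (xs @ [a]) \<and> walk C (a # zs)"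
  by (induction xs rule: walk_edges.induct) auto

lemma walk_rev: "walk C (rev ns) \<longleftrightarrow> walk C ns"
proof (induction ns rule: walk_edges.induct)
  case (1 x y ns)
  have "walk C (rev (x # y # ns)) \<longleftrightarrow> walk C (rev ns @ [y]) \<and> walk C [y, x]"
    using walk_append[of C "rev ns" y "[x]"] by simp
  then show ?case using 1 links_commute by auto
qed auto

lemma walk_snoc: "walk C ns \<Longrightarrow> ns \<noteq> [] \<Longrightarrow> e \<in> C \<Longrightarrow> links e (last ns) a \<Longrightarrow> walk C (ns @ [a])"
  by (induction C ns rule: walk.induct) auto

lemma walk_parity:
  "walk C ns \<Longrightarrow> k < length ns \<Longrightarrow> is_dem (ns ! k) \<longleftrightarrow> (is_dem (hd ns) \<longleftrightarrow> even k)"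
proof (induction k arbitrary: ns)
  case 0
  then show ?case
    by (cases ns) auto
next
  case (Suc k)
  then obtain x y zs where ns: "ns = x # y # zs"
    by (cases ns; cases "tl ns") auto
  with Suc.prems obtain e where "links e x y" "walk C (y # zs)"
    by auto
  with Suc.IH[of "y # zs"] Suc.prems(2) ns links_is_dem[of e x y] show ?case
    by auto
qed

lemma walk_edges_append: "walk_edges (xs @ a # zs) = walk_edges (xs @ [a]) @ walk_edges (a # zs)"
  by (induction xs rule: walk_edges.induct) auto

lemma walk_edges_rev: "walk_edges (rev ns) = rev (walk_edges ns)"
proof (induction ns rule: walk_edges.induct)
  case (1 x y ns)
  have "walk_edges (rev (x # y # ns)) = walk_edges (rev ns @ [y]) @ walk_edges [y, x]"
    using walk_edges_append[of "rev ns" y "[x]"] by simp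
  then show ?case using 1 by (simp add: edge_between_commute)
qed auto

lemma walk_edges_subset: "walk C ns \<Longrightarrow> set (walk_edges ns) \<subseteq> C"
  by (induction C ns rule: walk.induct) (auto dest: links_imp_edge_between)

lemma links_endpoint: "links e x y \<Longrightarrow> links e a b \<Longrightarrow> a = x \<or> a = y"
  by (auto simp: links_def)

lemma walk_edges_ends:
  "walk C ns \<Longrightarrow> e \<in> set (walk_edges ns) \<Longrightarrow> links e a b \<Longrightarrow> a \<in> set ns"
proof (induction C ns rule: walk.induct)
  case (1 C x y ns)
  then obtain e' where "links e' x y"
    by auto
  then have "links (edge_between x y) x y"
    by (simp add: links_imp_edge_between)
  with 1 show ?case
    using links_endpoint by fastforce
qed auto

fun alt_count :: "(nat \<times> nat) list \<Rightarrow> nat \<times> nat \<Rightarrow> real" where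
  "alt_count [] e = 0"
| "alt_count (a # es) e = (if a = e then 1 else 0) - alt_count es e"

lemma alt_count_notin: "e \<notin> set es \<Longrightarrow> alt_count es e = 0"
  by (induction es) auto

lemma alt_count_append: "alt_count (es @ fs) e = alt_count es e + (-1) ^ length es * alt_count fs e"
  by (induction es) (auto simp: algebra_simps)

definition node_sum :: "nat \<Rightarrow> nat \<Rightarrow> (nat \<times> nat \<Rightarrow> real) \<Rightarrow> node \<Rightarrow> real" where
  "node_sum N1 N2 f x = (case x of Sup i \<Rightarrow> \<Sum>j<N2. f (i, j) | Dem j \<Rightarrow> \<Sum>i<N1. f (i, j))"

lemma node_sum_diff: "node_sum N1 N2 (\<lambda>e. f e - g e) x = node_sum N1 N2 f x - node_sum N1 N2 g x"
  by (cases x) (simp_all add: node_sum_def sum_subtractf)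

lemma node_sum_indicator:
  assumes "links e a b" "e \<in> {..<N1} \<times> {..<N2}"
  shows "node_sum N1 N2 (\<lambda>e'. if e = e' then 1 else 0) x = (if a = x then 1 else 0) + (if b = x then 1 else 0)"
  using assms by (cases x; cases e) (auto simp: node_sum_def links_def sum.If_cases)

lemma node_sum_walk:
  "walk C ns \<Longrightarrow> C \<subseteq> {..<N1} \<times> {..<N2} \<Longrightarrow> ns \<noteq> [] \<Longrightarrow>
   node_sum N1 N2 (alt_count (walk_edges ns)) x =
     (if hd ns = x then 1 else 0) + (-1) ^ length ns * (if last ns = x then 1 else 0)"
proof (induction C ns rule: walk.induct)
  case (1 C y z ns)
  then obtain e where e: "e \<in> C" "links e y z"
    by auto
  have "alt_count (walk_edges (y # z # ns))
      = (\<lambda>e'. (if e = e' then 1 else 0) - alt_count (walk_edges (z # ns)) e')"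
    using links_imp_edge_between[OF e(2)] by auto
  then have "node_sum N1 N2 (alt_count (walk_edges (y # z # ns))) x
      = node_sum N1 N2 (\<lambda>e'. if e = e' then 1 else 0) x - node_sum N1 N2 (alt_count (walk_edges (z # ns))) x"
    by (simp only: node_sum_diff)
  also have "\<dots> = (if y = x then 1 else 0) - (-1) ^ length (z # ns) * (if last (z # ns) = x then 1 else 0)"
    using 1 e node_sum_indicator[OF e(2), of N1 N2] by auto
  also have "\<dots> = (if hd (y # z # ns) = x then 1 else 0)
      + (-1) ^ length (y # z # ns) * (if last (y # z # ns) = x then 1 else 0)"
    by simp
  finally show ?case .
qed (auto simp: node_sum_def split: node.split)

text \<open>A closed walk in a bipartite graph has an odd number of nodes, so the endpoint terms cancel.\<close>

lemma closed_walk_node_sum_zero: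
  assumes "walk C ns" "C \<subseteq> {..<N1} \<times> {..<N2}" "ns \<noteq> []" "hd ns = last ns"
  shows "node_sum N1 N2 (alt_count (walk_edges ns)) x = 0"
proof -
  have "last ns = ns ! (length ns - 1)"
    using assms(3) by (rule last_conv_nth)
  then have "odd (length ns)"
    using walk_parity[OF assms(1), of "length ns - 1"] assms(3,4) by auto
  then show ?thesis
    using node_sum_walk[OF assms(1-3)] assms(4) by simp
qed

lemma TP_add_bounded_circulation:
  fixes z :: "nat \<Rightarrow> nat \<Rightarrow> real"
  assumes y: "y \<in> TP N1 N2 u v"
    and rows: "\<forall>i<N1. (\<Sum>j<N2. z i j) = 0" and cols: "\<forall>j<N2. (\<Sum>i<N1. z i j) = 0"
    and small: "\<forall>i j. \<bar>z i j\<bar> \<le> y i j"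
  shows "(\<lambda>i j. y i j + z i j) \<in> TP N1 N2 u v"
proof -
  have out: "y i j = 0 \<and> z i j = 0" if "\<not> (i < N1 \<and> j < N2)" for i j
  proof -
    have "y i j = 0"
      using y that by (auto simp: TP_def)
    then show ?thesis
      using small by (metis abs_le_zero_iff)
  qed
  show ?thesis
    unfolding TP_def mem_Collect_eq
  proof (intro conjI allI impI)
    fix i j
    show "(i < N1 \<and> j < N2) \<or> y i j + z i j = 0"
      using out[of i j] by (metis add.right_neutral)
    show "0 \<le> y i j + z i j"
      using small[rule_format, of i j] by (simp add: abs_le_iff)
  next
    fix i assume "i < N1"
    then show "(\<Sum>j<N2. y i j + z i j) = u i"
      using y rows by (simp add: TP_def sum.distrib)
  next
    fix j assume "j < N2"
    then show "(\<Sum>i<N1. y i j + z i j) = v j"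
      using y cols by (simp add: TP_def sum.distrib)
  qed
qed

lemma support_scaling_bound:
  fixes z :: "nat \<Rightarrow> nat \<Rightarrow> real"
  assumes y: "y \<in> TP N1 N2 u v"
    and supp: "\<forall>i j. z i j \<noteq> 0 \<longrightarrow> (i, j) \<in> support N1 N2 y"
  obtains \<epsilon> where "\<epsilon> > 0" "\<forall>i j. \<epsilon> * \<bar>z i j\<bar> \<le> y i j"
proof
  define E where "E = support N1 N2 y"
  have "finite E"
    unfolding E_def support_def by (rule finite_subset[of _ "{..<N1} \<times> {..<N2}"]) auto
  define \<epsilon> where "\<epsilon> = Min (insert 1 ((\<lambda>(i, j). y i j / (\<bar>z i j\<bar> + 1)) ` E))"
  show "\<epsilon> > 0"
    using \<open>finite E\<close> by (auto simp: \<epsilon>_def E_def support_def)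
  show "\<forall>i j. \<epsilon> * \<bar>z i j\<bar> \<le> y i j"
  proof (intro allI)
    fix i j
    show "\<epsilon> * \<bar>z i j\<bar> \<le> y i j"
    proof (cases "(i, j) \<in> E")
      case True
      then have "\<epsilon> \<le> y i j / (\<bar>z i j\<bar> + 1)"
        using \<open>finite E\<close> unfolding \<epsilon>_def by (intro Min_le) auto
      then have "\<epsilon> * (\<bar>z i j\<bar> + 1) \<le> y i j"
        by (simp add: pos_le_divide_eq add_pos_nonneg)
      with \<open>\<epsilon> > 0\<close> show ?thesis
        by (simp add: algebra_simps)
    next
      case False
      then have "z i j = 0"
        using supp by (auto simp: E_def)
      then show ?thesis
        using y by (simp add: TP_def)
    qed
  qed
qed

lemma vertex_no_circulation:
  fixes z :: "nat \<Rightarrow> nat \<Rightarrow> real"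
  assumes vert: "is_vertex (TP N1 N2 u v) y"
    and supp: "\<forall>i j. z i j \<noteq> 0 \<longrightarrow> (i, j) \<in> support N1 N2 y"
    and rows: "\<forall>i<N1. (\<Sum>j<N2. z i j) = 0" and cols: "\<forall>j<N2. (\<Sum>i<N1. z i j) = 0"
  shows "z i j = 0"
proof (rule ccontr)
  assume nz: "z i j \<noteq> 0"
  have y: "y \<in> TP N1 N2 u v"
    using vert by (simp add: is_vertex_def)
  obtain \<epsilon> where "\<epsilon> > 0" and bound: "\<forall>i j. \<epsilon> * \<bar>z i j\<bar> \<le> y i j"
    using support_scaling_bound[OF y supp] by blast
  have in_TP: "(\<lambda>i j. y i j + c * z i j) \<in> TP N1 N2 u v" if "\<bar>c\<bar> = \<epsilon>" for c
    using TP_add_bounded_circulation[OF y, of "\<lambda>i j. c * z i j"] rows cols bound that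
    by (simp add: sum_distrib_left[symmetric] abs_mult)
  define a where "a = (\<lambda>i j. y i j + \<epsilon> * z i j)"
  define b where "b = (\<lambda>i j. y i j + (- \<epsilon>) * z i j)"
  have "a \<in> TP N1 N2 u v" "b \<in> TP N1 N2 u v"
    using in_TP[of \<epsilon>] in_TP[of "- \<epsilon>"] \<open>\<epsilon> > 0\<close> unfolding a_def b_def by simp_all
  moreover have "a \<noteq> b"
  proof
    assume "a = b"
    then have "a i j = b i j"
      by simp
    with nz \<open>\<epsilon> > 0\<close> show False
      by (simp add: a_def b_def)
  qed
  moreover have "y = (\<lambda>i j. (1/2) * a i j + (1 - 1/2) * b i j)"
    by (simp add: a_def b_def algebra_simps)
  moreover have "0 < (1/2 :: real)" "(1/2 :: real) < 1"
    by simp_all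
  ultimately show False
    using vert unfolding is_vertex_def by blast
qed

lemma support_subset_range: "support N1 N2 y \<subseteq> {..<N1} \<times> {..<N2}"
  by (auto simp: support_def)

lemma vertex_closed_walk_alt_count_zero:
  assumes vert: "is_vertex (TP N1 N2 u v) y"
    and W: "walk (support N1 N2 y) W" "W \<noteq> []" "hd W = last W"
  shows "alt_count (walk_edges W) e = 0"
proof -
  define z where "z i j = alt_count (walk_edges W) (i, j)" for i j
  have "z i j = 0" for i j
  proof (rule vertex_no_circulation[OF vert])
    show "\<forall>i j. z i j \<noteq> 0 \<longrightarrow> (i, j) \<in> support N1 N2 y"
      using walk_edges_subset[OF W(1)] alt_count_notin by (auto simp: z_def)
    show "\<forall>i<N1. (\<Sum>j<N2. z i j) = 0" "\<forall>j<N2. (\<Sum>i<N1. z i j) = 0"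
      using closed_walk_node_sum_zero[OF W(1) support_subset_range W(2,3), of "Sup _"]
        closed_walk_node_sum_zero[OF W(1) support_subset_range W(2,3), of "Dem _"]
      by (simp_all add: z_def node_sum_def)
  qed
  then show ?thesis
    by (cases e) (simp add: z_def)
qed

lemma closed_walk_through_edge:
  assumes A: "walk C (A @ [a, b])" "b \<notin> set (A @ [a])"
    and B: "walk C (B @ [b, a])" "a \<notin> set (B @ [b])"
    and hd: "hd (A @ [a]) = hd (B @ [b])" and e: "links e a b"
  shows "\<exists>W. walk C W \<and> W \<noteq> [] \<and> hd W = last W \<and> alt_count (walk_edges W) e \<noteq> 0"
proof -
  define W where "W = A @ a # rev (B @ [b])"
  have "walk C (A @ [a])"
    using A(1) walk_append[of C A a "[b]"] by simp
  moreover have "walk C (a # rev (B @ [b]))"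
    using B(1) walk_rev[of C "B @ [b, a]"] by simp
  ultimately have "walk C W"
    unfolding W_def using walk_append by blast
  moreover have "W \<noteq> []" "hd W = last W"
    using hd by (cases A; cases B; simp add: W_def last_rev)+
  moreover have "e \<notin> set (walk_edges (A @ [a]))"
    using walk_edges_ends[OF \<open>walk C (A @ [a])\<close>, of e b a] A(2) e by (auto simp: links_commute)
  moreover have "e \<notin> set (walk_edges (B @ [b]))"
    using walk_edges_ends[of C "B @ [b]" e] B walk_append[of C B b "[a]"] e by auto
  moreover have "walk_edges W = walk_edges (A @ [a]) @ e # rev (walk_edges (B @ [b]))"
    using walk_edges_append[of A a "rev (B @ [b])"] links_imp_edge_between[OF e]
    by (simp add: W_def walk_edges_rev[symmetric])
  ultimately show ?thesis
    by (auto simp: alt_count_append alt_count_notin)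
qed

lemma edge_pos_prefix:
  assumes "edge_pos C x e k"
  obtains A a b where "walk C (A @ [a, b])" "distinct (A @ [a, b])" "hd (A @ [a]) = x"
    "links e a b" "is_dem a \<longleftrightarrow> (is_dem x \<longleftrightarrow> odd k)"
proof -
  obtain ns where ns: "distinct ns" "walk C ns" "ns \<noteq> []" "hd ns = x" "1 \<le> k" "k < length ns"
    and e: "links e (ns ! (k - 1)) (ns ! k)"
    using assms by (auto simp: edge_pos_def path_in_iff_walk)
  define A where "A = take (k - 1) ns"
  have take_k: "take k ns = A @ [ns ! (k - 1)]"
    using take_Suc_conv_app_nth[of "k - 1" ns] ns(5,6) by (simp add: A_def)
  then have "take (Suc k) ns = A @ [ns ! (k - 1), ns ! k]"
    using take_Suc_conv_app_nth[of k ns] ns(6) by simp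
  moreover have "hd (take k ns) = x"
    using ns(4,5) by simp
  moreover have "is_dem (ns ! (k - 1)) \<longleftrightarrow> (is_dem x \<longleftrightarrow> odd k)"
    using walk_parity[OF ns(2), of "k - 1"] ns(4-6) by auto
  ultimately show ?thesis
    using that[of A "ns ! (k - 1)" "ns ! k"] e walk_take[OF ns(2), of "Suc k"] distinct_take[OF ns(1), of "Suc k"]
      take_k by simp
qed

lemma links_opposite:
  "links e a b \<Longrightarrow> links e a' b' \<Longrightarrow> is_dem a \<Longrightarrow> \<not> is_dem a' \<Longrightarrow> a' = b \<and> b' = a"
  by (auto simp: links_def)

lemma vertex_plus_edge_not_minus_edge:
  assumes vert: "is_vertex (TP N1 N2 u v) y" and plus: "plus_edge (support N1 N2 y) d e"
  shows "\<not> minus_edge (support N1 N2 y) d e"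
proof
  assume "minus_edge (support N1 N2 y) d e"
  then obtain k where k: "even k" "edge_pos (support N1 N2 y) (Dem d) e k"
    unfolding minus_edge_def by blast
  from k(2) obtain B b a where B: "walk (support N1 N2 y) (B @ [b, a])" "distinct (B @ [b, a])"
    "hd (B @ [b]) = Dem d" "links e b a" "is_dem b \<longleftrightarrow> (is_dem (Dem d) \<longleftrightarrow> odd k)"
    by (rule edge_pos_prefix)
  from plus obtain k' where k': "odd k'" "edge_pos (support N1 N2 y) (Dem d) e k'"
    unfolding plus_edge_def by blast
  from k'(2) obtain A a' b' where A: "walk (support N1 N2 y) (A @ [a', b'])" "distinct (A @ [a', b'])"
    "hd (A @ [a']) = Dem d" "links e a' b'" "is_dem a' \<longleftrightarrow> (is_dem (Dem d) \<longleftrightarrow> odd k')"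
    by (rule edge_pos_prefix)
  have "a' = a" "b' = b"
    using links_opposite[OF A(4) B(4)] A(5) B(5) k(1) k'(1) by simp_all
  then obtain W where "walk (support N1 N2 y) W" "W \<noteq> []" "hd W = last W"
      "alt_count (walk_edges W) e \<noteq> 0"
    using closed_walk_through_edge[of _ A a b B e] A B by auto
  then show False
    using vertex_closed_walk_alt_count_zero[OF vert] by blast
qed

definition reach :: "(nat \<times> nat) set \<Rightarrow> node \<Rightarrow> node \<Rightarrow> bool" where
  "reach C x x' \<longleftrightarrow> (\<exists>ns. path_in C ns \<and> ns \<noteq> [] \<and> hd ns = x \<and> last ns = x')"

lemma reach_refl: "reach C x x"
  unfolding reach_def path_in_iff_walk by (rule exI[of _ "[x]"]) simp

lemma reach_step:
  assumes "reach C x x'" "e \<in> C" "links e x' x''"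
  shows "reach C x x''"
proof -
  obtain ns where ns: "distinct ns" "walk C ns" "ns \<noteq> []" "hd ns = x" "last ns = x'"
    using assms(1) by (auto simp: reach_def path_in_iff_walk)
  show ?thesis
  proof (cases "x'' \<in> set ns")
    case True
    then obtain p where p: "p < length ns" "ns ! p = x''"
      by (auto simp: in_set_conv_nth)
    then have "last (take (Suc p) ns) = x''"
      by (simp add: take_Suc_conv_app_nth)
    moreover have "distinct (take (Suc p) ns)" "walk C (take (Suc p) ns)"
      "take (Suc p) ns \<noteq> []" "hd (take (Suc p) ns) = x"
      using ns by (simp_all add: walk_take)
    ultimately show ?thesis
      unfolding reach_def path_in_iff_walk by blast
  next
    case False
    then have "distinct (ns @ [x''])" "walk C (ns @ [x''])" "hd (ns @ [x'']) = x"
      using ns walk_snoc[OF ns(2,3) assms(2)] assms(3) by simp_all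
    then show ?thesis
      unfolding reach_def path_in_iff_walk by (intro exI[of _ "ns @ [x'']"]) simp
  qed
qed

lemma support_closed_block_balanced:
  assumes y: "y \<in> TP N1 N2 u v" and I: "I \<subseteq> {..<N1}" and J: "J \<subseteq> {..<N2}"
    and closed: "\<forall>(i, j) \<in> support N1 N2 y. i \<in> I \<longleftrightarrow> j \<in> J"
  shows "sum u I = sum v J"
proof -
  have zero: "y i j = 0" if "i < N1" "j < N2" "i \<in> I \<longleftrightarrow> j \<notin> J" for i j
  proof (rule ccontr)
    assume "y i j \<noteq> 0"
    with y have "(i, j) \<in> support N1 N2 y"
      using that(1,2) by (auto simp: TP_def support_def less_le)
    with closed that(3) show False
      by auto
  qed
  have rows: "u i = (\<Sum>j\<in>J. y i j)" if "i \<in> I" for i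
  proof -
    have "u i = (\<Sum>j<N2. y i j)"
      using y I that by (auto simp: TP_def)
    also have "\<dots> = (\<Sum>j\<in>J. y i j)"
    proof (rule sum.mono_neutral_right)
      show "\<forall>j\<in>{..<N2} - J. y i j = 0"
        using zero that I by blast
    qed (use J in auto)
    finally show ?thesis .
  qed
  have cols: "v j = (\<Sum>i\<in>I. y i j)" if "j \<in> J" for j
  proof -
    have "v j = (\<Sum>i<N1. y i j)"
      using y J that by (auto simp: TP_def)
    also have "\<dots> = (\<Sum>i\<in>I. y i j)"
    proof (rule sum.mono_neutral_right)
      show "\<forall>i\<in>{..<N1} - I. y i j = 0"
        using zero that J by blast
    qed (use I in auto)
    finally show ?thesis .
  qed
  have "sum u I = (\<Sum>i\<in>I. \<Sum>j\<in>J. y i j)"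
    by (rule sum.cong[OF refl]) (rule rows)
  also have "\<dots> = (\<Sum>j\<in>J. \<Sum>i\<in>I. y i j)"
    by (rule sum.swap)
  also have "\<dots> = sum v J"
    by (rule sum.cong[OF refl]) (simp add: cols)
  finally show ?thesis .
qed

lemma support_connected:
  assumes y: "y \<in> TP N1 N2 u v"
    and upos: "\<forall>i<N1. u i > 0" and vpos: "\<forall>j<N2. v j > 0"
    and balanced: "(\<Sum>i<N1. u i) = (\<Sum>j<N2. v j)"
    and nd: "non_degenerate N1 N2 u v" and s: "s < N1" and j: "j < N2"
  shows "reach (support N1 N2 y) (Sup s) (Dem j)"
proof (rule ccontr)
  assume unreached: "\<not> reach (support N1 N2 y) (Sup s) (Dem j)"
  define I where "I = {i. i < N1 \<and> reach (support N1 N2 y) (Sup s) (Sup i)}"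
  define J where "J = {j. j < N2 \<and> reach (support N1 N2 y) (Sup s) (Dem j)}"
  have "\<forall>(i, j) \<in> support N1 N2 y. i \<in> I \<longleftrightarrow> j \<in> J"
  proof clarify
    fix i j assume ij: "(i, j) \<in> support N1 N2 y"
    have "links (i, j) (Sup i) (Dem j)" "links (i, j) (Dem j) (Sup i)"
      by (simp_all add: links_def)
    then show "i \<in> I \<longleftrightarrow> j \<in> J"
      using ij reach_step[OF _ ij] by (auto simp: I_def J_def support_def)
  qed
  then have eq: "sum u I = sum v J"
    using support_closed_block_balanced[OF y] by (simp add: I_def J_def subset_eq)
  have "s \<in> I" "j \<notin> J"
    using s unreached by (simp_all add: I_def J_def reach_refl)
  consider "J = {}" | "I = {..<N1}" | "I \<noteq> {}" "I \<subset> {..<N1}" "J \<noteq> {}" "J \<subset> {..<N2}"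
    using \<open>s \<in> I\<close> \<open>j \<notin> J\<close> j by (auto simp: I_def J_def)
  then show False
  proof cases
    case 1
    have "sum u I > 0"
      using \<open>s \<in> I\<close> upos by (intro sum_pos2[of _ s]) (auto simp: I_def less_imp_le)
    with eq 1 show False
      by simp
  next
    case 2
    have "(\<Sum>j<N2. v j) = sum v J + sum v ({..<N2} - J)"
      using sum.subset_diff[of J "{..<N2}" v] by (auto simp: J_def add.commute)
    moreover have "sum v ({..<N2} - J) > 0"
      using \<open>j \<notin> J\<close> j vpos by (intro sum_pos2[of _ j]) (auto simp: less_imp_le)
    ultimately show False
      using eq balanced 2 by simp
  next
    case 3
    with eq nd show False
      unfolding non_degenerate_def by blast
  qed
qed

lemma reach_odd_edge:
  assumes "reach C (Sup s) (Dem j)"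
  shows "\<exists>i. (i, j) \<in> C \<and> odd_wrt C s (i, j)"
proof -
  obtain ns where ns: "path_in C ns" "ns \<noteq> []" "hd ns = Sup s" "last ns = Dem j"
    using assms by (auto simp: reach_def)
  define k where "k = length ns - 1"
  have k: "k < length ns" "ns ! k = Dem j"
    using ns(2,4) by (simp_all add: k_def last_conv_nth)
  have "k \<noteq> 0"
  proof
    assume "k = 0"
    with k(2) ns(2,3) show False
      by (simp add: hd_conv_nth)
  qed
  then have "Suc (k - 1) < length ns" "Suc (k - 1) = k"
    using k(1) by simp_all
  then obtain e where e: "e \<in> C" "links e (ns ! (k - 1)) (ns ! k)"
    using ns(1) unfolding path_in_def by metis
  have "odd k"
    using walk_parity[of C ns k] ns(1,3) k by (simp add: path_in_iff_walk)
  then have "odd_wrt C s e"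
    using e ns k(1) \<open>k \<noteq> 0\<close> unfolding odd_wrt_def edge_pos_def by (auto intro!: exI[of _ k])
  moreover obtain i where "e = (i, j)"
    using e(2) k(2) by (cases e) (auto simp: links_def)
  ultimately show ?thesis
    using e(1) by blast
qed

theorem lemma3:
  fixes N1 N2 :: nat and u v :: "nat \<Rightarrow> real"
    and F C S :: "(nat \<times> nat) set" and ds :: nat
  assumes "N1 \<ge> 1" and "N2 \<ge> 1"
    and "\<forall>i<N1. u i > 0" and "\<forall>j<N2. v j > 0"
    and "(\<Sum>i<N1. u i) = (\<Sum>j<N2. v j)"
    and "non_degenerate N1 N2 u v"
    and "is_tree N1 N2 u v F" and "ds < N2"
    and "is_tree N1 N2 u v C" and "S \<subseteq> C \<inter> F"
    and "\<exists>s<N1. SIN F ds C S s"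
  shows "\<not> (\<exists>j<N2. \<forall>i. (i, j) \<in> C \<longrightarrow> (i, j) \<in> S \<and> plus_edge F ds (i, j))
         \<and> (\<forall>j<N2. well_connected C S j \<longrightarrow> (\<exists>i. (i, j) \<in> S \<and> minus_edge F ds (i, j)))"
proof -
  obtain yF where yF: "is_vertex (TP N1 N2 u v) yF" "F = support N1 N2 yF"
    using assms(7) by (auto simp: is_tree_def)
  obtain yC where yC: "yC \<in> TP N1 N2 u v" "C = support N1 N2 yC"
    using assms(9) by (auto simp: is_tree_def is_vertex_def)
  obtain s where s: "s < N1" "SIN F ds C S s"
    using assms(11) by blast
  have odd_edge: "\<exists>i. (i, j) \<in> C \<and> odd_wrt C s (i, j)" if "j < N2" for j
    using reach_odd_edge support_connected[OF yC(1) assms(3-6) s(1) that] yC(2) by simp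
  have shaded_odd: "minus_edge F ds e \<and> \<not> plus_edge F ds e" if "e \<in> S" "odd_wrt C s e" for e
    using s(2) that assms(10) vertex_plus_edge_not_minus_edge[OF yF(1)] yF(2) unfolding SIN_def by blast
  show ?thesis
    using odd_edge shaded_odd unfolding well_connected_def by blast
qed

end
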